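(* Suppose $m=1$. Then for every $\ell\in\{1,\dots,D\}$ the family $(\beta_{Q,\ell})_{Q\in\mathcal Q}$ is ultimately constant.
   Context: Let $(K,v)$ be a valued field, $\Gamma$ the divisible hull of $vK$, embedded in a divisible ordered abelian group $\Lambda$. Let $\nu\colon K[x]\to\Lambda\cup\{\infty\}$ be a valuation extending $v$ which is well-specified, i.e. it is not the case that simultaneously $\nu^{-1}(\infty)=0$, the value group of $\nu$ modulo $\Gamma$ is torsion, and the residue field of $\nu$ is algebraic over that of $v$. For $s\ge0$ let $\partial_s$ be the $s$-th Hasse–Schmidt derivative, defined by $f(x+y)=\sum_{s\ge0}(\partial_sf)y^s$. For nonconstant $f$ with $\nu(f)<\infty$ the level is $\epsilon_\nu(f)=\max\{(\nu(f)-\nu(\partial_sf))/s: s\ge1\}$; $\epsilon_\nu(a)=-\infty$ for $a\in K$. A monic $Q\in K[x]$ is a key polynomial for $\nu$ if $\epsilon_\nu(f)<\epsilon_\nu(Q)$ whenever $\deg f<\deg Q$. For monic $Q$, each $f$ has a unique $Q$-expansion $f=\sum_{i\ge0}f_{Q,i}Q^i$ with $\deg f_{Q,i}<\deg Q$; set $\nu_Q(f)=\min_i\nu(f_{Q,i}Q^i)$. Fix $m\ge1$ such that the set $\Psi_m$ of key polynomials of degree $m$ for $\nu$ is nonempty and has no element of maximal $\nu$-value. Let $\mathcal Q\subseteq\Psi_m$ be well-ordered by $Q<R\iff\nu(Q)<\nu(R)$ and cofinal in $\Psi_m$ for $\nu$-values. A family indexed by $\mathcal Q$ is ultimately constant if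 it is constant on a final segment of $\mathcal Q$. $f$ is $\mathcal Q$-stable if $\nu_Q(f)=\nu(f)$ for all $Q$ in a final segment of $\mathcal Q$, $\mathcal Q$-unstable otherwise. Assume unstable polynomials exist; limit key polynomials are the monic $\mathcal Q$-unstable polynomials of minimal degree, forming $\mathrm{KP}_\infty(\mathcal Q)$. Fix $F\in\mathrm{KP}_\infty(\mathcal Q)$, $D=\lfloor\deg F/m\rfloor$, $F=\sum_{\ell=0}^DF_{Q,\ell}Q^\ell$ its $Q$-expansion and $\beta_{Q,\ell}=\nu(F_{Q,\ell})\in\Lambda\cup\{\infty\}$. *)

theory Defs
  imports "HOL-Computational_Algebra.Polynomial" "HOL-Library.Extended"
begin

text \<open>Values of \<nu> live in \<Lambda> \<union> {\<infinity>}, rendered as the type 'g extended,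
  using only Fin and Pinf (Pinf = \<infinity>); Minf plays the role of -\<infinity> for levels.\<close>

definition nsm :: "nat \<Rightarrow> 'g::ab_group_add \<Rightarrow> 'g" where
  "nsm n y = (\<Sum>i<n. y)"

definition divn :: "nat \<Rightarrow> 'g::ab_group_add \<Rightarrow> 'g" where
  "divn n x = (THE y. nsm n y = x)"

definition divisible_group :: "'g::ab_group_add itself \<Rightarrow> bool" where
  "divisible_group _ \<longleftrightarrow> (\<forall>(x::'g) n. n > 0 \<longrightarrow> (\<exists>y. nsm n y = x))"

definition is_poly_valuation :: "('k::field poly \<Rightarrow> 'g::linordered_ab_group_add extended) \<Rightarrow> bool" where
  "is_poly_valuation \<nu> \<longleftrightarrow>
     (\<forall>f. \<nu> f \<noteq> Minf) \<and> \<nu> 0 = Pinf \<and> \<nu> 1 = Fin 0 \<and>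
     (\<forall>f g. \<nu> (f * g) = \<nu> f + \<nu> g) \<and>
     (\<forall>f g. min (\<nu> f) (\<nu> g) \<le> \<nu> (f + g))"

definition base_value_group :: "('k::field poly \<Rightarrow> 'g::linordered_ab_group_add extended) \<Rightarrow> 'g set" where
  "base_value_group \<nu> = {a. \<exists>c. c \<noteq> 0 \<and> \<nu> [:c:] = Fin a}"

definition Gamma :: "('k::field poly \<Rightarrow> 'g::linordered_ab_group_add extended) \<Rightarrow> 'g set" where
  "Gamma \<nu> = {x. \<exists>n>0. nsm n x \<in> base_value_group \<nu>}"

definition value_group :: "('k::field poly \<Rightarrow> 'g::linordered_ab_group_add extended) \<Rightarrow> 'g set" where
  "value_group \<nu> = {a - b | a b f g. \<nu> f = Fin a \<and> \<nu> g = Fin b}"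

definition value_group_torsion_mod_Gamma :: "('k::field poly \<Rightarrow> 'g::linordered_ab_group_add extended) \<Rightarrow> bool" where
  "value_group_torsion_mod_Gamma \<nu> \<longleftrightarrow> (\<forall>x \<in> value_group \<nu>. \<exists>n>0. nsm n x \<in> Gamma \<nu>)"

text \<open>Residue field of \<nu> (on K(x), when the support is 0) algebraic over that of v:
  every residue class of f/g with \<nu>(f) = \<nu>(g) is a root of a nonzero polynomial over
  the residue field of v, i.e. there are a_0..a_n in the valuation ring of v, not all in
  its maximal ideal, with \<nu>(\<Sum> a_i f^i g^(n-i)) > n \<nu>(g).\<close>
definition residue_field_algebraic :: "('k::field poly \<Rightarrow> 'g::linordered_ab_group_add extended) \<Rightarrow> bool" where
  "residue_field_algebraic \<nu> \<longleftrightarrow>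
    (\<forall>f g b. g \<noteq> 0 \<and> \<nu> g = Fin b \<and> \<nu> f = Fin b \<longrightarrow>
       (\<exists>n (a :: nat \<Rightarrow> 'k). (\<forall>i\<le>n. Fin 0 \<le> \<nu> [:a i:]) \<and> (\<exists>i\<le>n. \<nu> [:a i:] = Fin 0) \<and>
          Fin (nsm n b) < \<nu> (\<Sum>i\<le>n. smult (a i) (f ^ i * g ^ (n - i)))))"

definition well_specified :: "('k::field poly \<Rightarrow> 'g::linordered_ab_group_add extended) \<Rightarrow> bool" where
  "well_specified \<nu> \<longleftrightarrow>
     \<not> ({f. \<nu> f = Pinf} = {0} \<and> value_group_torsion_mod_Gamma \<nu> \<and> residue_field_algebraic \<nu>)"

text \<open>Hasse--Schmidt derivative: coefficient of y^s in f(x+y), computed in (K[x])[y].\<close>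
definition hasse :: "nat \<Rightarrow> 'k::field poly \<Rightarrow> 'k poly" where
  "hasse s f = coeff (pcompose (map_poly (\<lambda>c. [:c:]) f) [:[:0, 1:], 1:]) s"

text \<open>Level; Minf stands for -\<infinity>. Terms with \<nu>(\<partial>_s f) = \<infinity> contribute -\<infinity> and are omitted.\<close>
definition level :: "('k::field poly \<Rightarrow> 'g::linordered_ab_group_add extended) \<Rightarrow> 'k poly \<Rightarrow> 'g extended" where
  "level \<nu> f = (if degree f = 0 then Minf else
     Max {Fin (divn s (a - b)) | s a b. 1 \<le> s \<and> \<nu> f = Fin a \<and> \<nu> (hasse s f) = Fin b})"

definition key_poly :: "('k::field poly \<Rightarrow> 'g::linordered_ab_group_add extended) \<Rightarrow> 'k poly \<Rightarrow> bool" where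
  "key_poly \<nu> Q \<longleftrightarrow> lead_coeff Q = 1 \<and> \<nu> Q \<noteq> Pinf \<and>
     (\<forall>f. degree f < degree Q \<and> \<nu> f \<noteq> Pinf \<longrightarrow> level \<nu> f < level \<nu> Q)"

definition qexp :: "'k::field poly \<Rightarrow> 'k poly \<Rightarrow> nat \<Rightarrow> 'k poly" where
  "qexp Q f = (THE c. (\<forall>i. c i = 0 \<or> degree (c i) < degree Q) \<and>
       (\<exists>N. (\<forall>i>N. c i = 0) \<and> f = (\<Sum>i\<le>N. c i * Q ^ i)))"

definition nuQ :: "('k::field poly \<Rightarrow> 'g::linordered_ab_group_add extended) \<Rightarrow> 'k poly \<Rightarrow> 'k poly \<Rightarrow> 'g extended" where
  "nuQ \<nu> Q f = Min (range (\<lambda>i. \<nu> (qexp Q f i * Q ^ i)))"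

definition Psi :: "('k::field poly \<Rightarrow> 'g::linordered_ab_group_add extended) \<Rightarrow> nat \<Rightarrow> 'k poly set" where
  "Psi \<nu> m = {Q. key_poly \<nu> Q \<and> degree Q = m}"

definition ult_holds :: "('k::field poly \<Rightarrow> 'g::linordered_ab_group_add extended) \<Rightarrow> 'k poly set \<Rightarrow> ('k poly \<Rightarrow> bool) \<Rightarrow> bool" where
  "ult_holds \<nu> \<Q> P \<longleftrightarrow> (\<exists>Q0\<in>\<Q>. \<forall>Q\<in>\<Q>. \<nu> Q0 \<le> \<nu> Q \<longrightarrow> P Q)"

definition ultimately_constant :: "('k::field poly \<Rightarrow> 'g::linordered_ab_group_add extended) \<Rightarrow> 'k poly set \<Rightarrow> ('k poly \<Rightarrow> 'b) \<Rightarrow> bool" where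
  "ultimately_constant \<nu> \<Q> h \<longleftrightarrow> (\<exists>c. ult_holds \<nu> \<Q> (\<lambda>Q. h Q = c))"

definition Q_stable :: "('k::field poly \<Rightarrow> 'g::linordered_ab_group_add extended) \<Rightarrow> 'k poly set \<Rightarrow> 'k poly \<Rightarrow> bool" where
  "Q_stable \<nu> \<Q> f \<longleftrightarrow> ult_holds \<nu> \<Q> (\<lambda>Q. nuQ \<nu> Q f = \<nu> f)"

definition KP_infty :: "('k::field poly \<Rightarrow> 'g::linordered_ab_group_add extended) \<Rightarrow> 'k poly set \<Rightarrow> 'k poly set" where
  "KP_infty \<nu> \<Q> = {F. lead_coeff F = 1 \<and> \<not> Q_stable \<nu> \<Q> F \<and>
      (\<forall>G. lead_coeff G = 1 \<and> \<not> Q_stable \<nu> \<Q> G \<longrightarrow> degree F \<le> degree G)}"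

definition nu_well_ordered :: "('k::field poly \<Rightarrow> 'g::linordered_ab_group_add extended) \<Rightarrow> 'k poly set \<Rightarrow> bool" where
  "nu_well_ordered \<nu> \<Q> \<longleftrightarrow> inj_on \<nu> \<Q> \<and>
     (\<forall>S. S \<subseteq> \<Q> \<and> S \<noteq> {} \<longrightarrow> (\<exists>Q\<in>S. \<forall>R\<in>S. \<nu> Q \<le> \<nu> R))"

end

theory Submission
  imports Defs
begin

text \<open>For a monic linear \<open>Q = x - a\<close> the \<open>Q\<close>-expansion of \<open>F\<close> is its Taylor expansion at \<open>a\<close>,
  so \<open>F\<^sub>Q\<^sub>,\<^sub>l\<close> is the constant \<open>\<partial>\<^sub>l F(a)\<close>. For \<open>l \<ge> 1\<close> the Hasse derivative \<open>g = \<partial>\<^sub>l F\<close> has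
  degree below \<open>deg F\<close>, so by minimality of \<open>F\<close> it is \<open>\<Q>\<close>-stable. Take \<open>Q\<^sub>0 = x - a\<^sub>0 < Q\<close> in the
  stable range. Then \<open>\<nu>\<^sub>Q\<^sub>0(g) = \<nu>(g)\<close> bounds every term of the \<open>Q\<^sub>0\<close>-expansion below by \<open>\<nu>(g)\<close>,
  and this bound survives the translation from \<open>a\<^sub>0\<close> to \<open>a\<close> because \<open>\<nu>(a - a\<^sub>0) = \<nu>(Q\<^sub>0)\<close>: the
  \<open>Q\<close>-coefficients \<open>c\<^sub>i\<close> of \<open>g\<close> satisfy \<open>\<nu>(c\<^sub>i Q\<^sub>0\<^sup>i) \<ge> \<nu>(g)\<close>. Since \<open>\<nu>(Q) > \<nu>(Q\<^sub>0)\<close>, the minimum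
  \<open>\<nu>\<^sub>Q(g) = \<nu>(g)\<close> can then only be attained at \<open>i = 0\<close>, i.e. \<open>\<nu>(g(a)) = \<nu>(g)\<close> for all large \<open>Q\<close>.\<close>

lemma pcompose_eq_sum: "p \<circ>\<^sub>p q = (\<Sum>i\<le>degree p. [:coeff p i:] * q ^ i)"
  by (simp add: pcompose_altdef poly_altdef degree_map_poly coeff_map_poly)

lemma pcompose_power: "p ^ n \<circ>\<^sub>p q = (p \<circ>\<^sub>p q) ^ n"
  by (induction n) (simp_all add: pcompose_mult pcompose_1)

lemma monic_linear_eq:
  assumes "degree Q = 1" "lead_coeff Q = 1"
  shows "Q = [:coeff Q 0, 1:]"
proof (rule poly_eqI)
  fix n show "coeff Q n = coeff [:coeff Q 0, 1:] n"
    using assms by (cases n) (auto simp: coeff_pCons coeff_eq_0 split: nat.splits)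
qed

lemma qexp_linear:
  fixes a :: "'k::field"
  shows "qexp [:-a, 1:] f = (\<lambda>i. [:coeff (f \<circ>\<^sub>p [:a, 1:]) i:])"
proof -
  define p where "p = f \<circ>\<^sub>p [:a, 1:]"
  let ?Q = "[:-a, 1:]"
  let ?expansion = "\<lambda>c. (\<forall>i. c i = 0 \<or> degree (c i) < degree ?Q) \<and>
       (\<exists>N. (\<forall>i>N. c i = 0) \<and> f = (\<Sum>i\<le>N. c i * ?Q ^ i))"
  have "f = p \<circ>\<^sub>p ?Q"
    by (simp add: p_def pcompose_assoc[symmetric] pcompose_pCons)
  then have "?expansion (\<lambda>i. [:coeff p i:])"
    by (auto simp: pcompose_eq_sum coeff_eq_0 intro!: exI[of _ "degree p"])
  moreover have "c = (\<lambda>i. [:coeff p i:])" if "?expansion c" for c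
  proof -
    from that obtain N where N: "\<forall>i>N. c i = 0" "f = (\<Sum>i\<le>N. c i * ?Q ^ i)"
      and deg: "\<forall>i. c i = 0 \<or> degree (c i) = 0" by auto
    have const: "c i = [:coeff (c i) 0:]" for i
      using deg[rule_format, of i] by (auto simp: degree_0_id)
    have "c i \<circ>\<^sub>p q = c i" for i q
      by (metis const pcompose_const)
    then have "p = (\<Sum>i\<le>N. c i * [:0, 1:] ^ i)"
      by (simp add: p_def N(2) pcompose_sum pcompose_mult pcompose_power pcompose_pCons)
    also have "\<dots> = (\<Sum>i\<le>N. monom (coeff (c i) 0) i)"
      by (subst const) (simp add: monom_altdef)
    finally have "coeff p j = coeff (c j) 0" for j
      using N(1) by (auto simp: coeff_sum coeff_monom)
    then show ?thesis
      using const by auto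
  qed
  ultimately show ?thesis
    unfolding qexp_def p_def by (rule the_equality)
qed

lemma hasse_0 [simp]: "hasse s 0 = 0"
  by (simp add: hasse_def)

lemma hasse_pCons:
  "hasse j (pCons c f) =
     (if j = 0 then [:c:] else 0) + [:0, 1:] * hasse j f + (if j = 0 then 0 else hasse (j - 1) f)"
  by (cases j) (simp_all add: hasse_def map_poly_pCons pcompose_pCons)

lemma poly_hasse: "poly (hasse j f) a = coeff (f \<circ>\<^sub>p [:a, 1:]) j"
proof (induction f arbitrary: j rule: pCons_induct)
  case (pCons c f)
  then show ?case
    by (cases j) (simp_all add: hasse_pCons pcompose_pCons)
qed simp

lemma degree_hasse:
  assumes "hasse j f \<noteq> 0"
  shows "degree (hasse j f) + j \<le> degree f"
  using assms
proof (induction f arbitrary: j rule: pCons_induct)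
  case (pCons c f)
  let ?X = "[:0, 1:] :: 'a poly"
  have IH: "degree (hasse k f) \<le> degree f - k" for k
    using pCons.IH[of k] by (cases "hasse k f = 0") auto
  have X_mult: "degree (?X * hasse k f) \<le> degree f - k + 1" for k
    using degree_mult_le[of ?X "hasse k f"] IH[of k] by auto
  show ?case
  proof (cases "f = 0")
    case True
    then show ?thesis using pCons.prems by (cases j) (simp_all add: hasse_pCons)
  next
    case False
    show ?thesis
    proof (cases j)
      case 0
      then show ?thesis
        using X_mult[of 0] False by (auto simp: hasse_pCons intro!: degree_add_le)
    next
      case (Suc i)
      have "hasse j f \<noteq> 0 \<or> hasse i f \<noteq> 0"
        using pCons.prems Suc by (auto simp: hasse_pCons)
      then have "i \<le> degree f"
        using pCons.IH[of j] pCons.IH[of i] Suc by auto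
      moreover have "degree (?X * hasse j f) \<le> degree f - i"
        using X_mult[of j] pCons.IH[of j] Suc by (cases "hasse j f = 0") auto
      then have "degree (?X * hasse j f + hasse i f) \<le> degree f - i"
        using IH[of i] by (rule degree_add_le)
      ultimately show ?thesis
        using False Suc by (simp add: hasse_pCons del: mult_pCons_left)
    qed
  qed
qed simp

lemma extended_add_strict_mono:
  fixes a b c d :: "'a::linordered_ab_group_add extended"
  shows "a < b \<Longrightarrow> c < d \<Longrightarrow> a + c < b + d"
  by (cases a; cases b; cases c; cases d) (auto intro: add_strict_mono)

lemma extended_Fin_add_strict_left_mono:
  fixes b c :: "'a::linordered_ab_group_add extended"
  shows "b < c \<Longrightarrow> Fin x + b < Fin x + c"
  by (cases b; cases c) auto

lemma finite_range_coeff_terms: "finite (range (\<lambda>i. v ([:coeff p i:] * q ^ i)))"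
proof -
  have "v ([:coeff p i:] * q ^ i) \<in> insert (v 0) ((\<lambda>i. v ([:coeff p i:] * q ^ i)) ` {..degree p})"
    for i by (cases "i \<le> degree p") (auto simp: coeff_eq_0)
  then have "range (\<lambda>i. v ([:coeff p i:] * q ^ i)) \<subseteq>
      insert (v 0) ((\<lambda>i. v ([:coeff p i:] * q ^ i)) ` {..degree p})"
    by blast
  then show ?thesis
    by (rule finite_subset) simp
qed

lemma nuQ_linear:
  "nuQ v [:-a, 1:] f = Min (range (\<lambda>i. v ([:coeff (f \<circ>\<^sub>p [:a, 1:]) i:] * [:-a, 1:] ^ i)))"
  by (simp add: nuQ_def qexp_linear)

lemma nuQ_linear_le: "nuQ v [:-a, 1:] f \<le> v ([:coeff (f \<circ>\<^sub>p [:a, 1:]) i:] * [:-a, 1:] ^ i)"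
  unfolding nuQ_linear by (rule Min_le[OF finite_range_coeff_terms]) simp

lemma nuQ_linear_attained:
  "\<exists>i. nuQ v [:-a, 1:] f = v ([:coeff (f \<circ>\<^sub>p [:a, 1:]) i:] * [:-a, 1:] ^ i)"
proof -
  have "nuQ v [:-a, 1:] f \<in> range (\<lambda>i. v ([:coeff (f \<circ>\<^sub>p [:a, 1:]) i:] * [:-a, 1:] ^ i))"
    unfolding nuQ_linear by (rule Min_in[OF finite_range_coeff_terms]) simp
  then show ?thesis by auto
qed

lemma ult_holds_mono:
  "ult_holds v \<Q> P \<Longrightarrow> (\<And>Q. Q \<in> \<Q> \<Longrightarrow> P Q \<Longrightarrow> R Q) \<Longrightarrow> ult_holds v \<Q> R"
  unfolding ult_holds_def by blast

locale poly_valuation =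
  fixes \<nu> :: "'k::field poly \<Rightarrow> 'g::linordered_ab_group_add extended"
  assumes valuation: "is_poly_valuation \<nu>"
begin

lemma mult: "\<nu> (f * g) = \<nu> f + \<nu> g"
  using valuation by (simp add: is_poly_valuation_def)

lemma min_le_add: "min (\<nu> f) (\<nu> g) \<le> \<nu> (f + g)"
  using valuation by (simp add: is_poly_valuation_def)

lemma zero [simp]: "\<nu> 0 = Pinf"
  using valuation by (simp add: is_poly_valuation_def)

lemma one: "\<nu> 1 = Fin 0"
  using valuation by (simp add: is_poly_valuation_def)

lemma Fin_of_not_Pinf: "\<nu> f \<noteq> Pinf \<Longrightarrow> \<exists>x. \<nu> f = Fin x"
  using valuation by (cases "\<nu> f") (auto simp: is_poly_valuation_def)

lemma smult: "\<nu> (smult c f) = \<nu> [:c:] + \<nu> f"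
  by (simp flip: mult)

lemma const_mult: "\<nu> [:c * x:] = \<nu> [:c:] + \<nu> [:x:]"
  by (simp add: mult_ac flip: mult)

lemma add_ge: "G \<le> \<nu> f \<Longrightarrow> G \<le> \<nu> g \<Longrightarrow> G \<le> \<nu> (f + g)"
  using min_le_add[of f g] by (metis min.bounded_iff order_trans)

lemma uminus: "\<nu> (- f) = \<nu> f"
proof -
  have "\<nu> (-1) + \<nu> (-1) = Fin 0"
    using mult[of "-1" "-1"] one by simp
  then have "\<nu> (-1) = Fin 0"
    by (cases "\<nu> (-1)") auto
  then show ?thesis
    using mult[of "-1" f] valuation by (cases "\<nu> f") (auto simp: is_poly_valuation_def)
qed

lemma diff_eq_of_less:
  assumes "\<nu> f < \<nu> g"
  shows "\<nu> (f - g) = \<nu> f"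
proof (rule antisym)
  show "\<nu> f \<le> \<nu> (f - g)"
    using min_le_add[of f "- g"] assms by (simp add: uminus)
  show "\<nu> (f - g) \<le> \<nu> f"
    using min_le_add[of "f - g" g] assms by (auto simp: min_def split: if_splits)
qed

lemma power_strict_mono:
  assumes "\<nu> f < \<nu> g" "0 < n"
  shows "\<nu> (f ^ n) < \<nu> (g ^ n)"
  using assms(2)
proof (induction n rule: nat_induct_non_zero)
  case (Suc n)
  then show ?case
    using extended_add_strict_mono[OF assms(1) Suc.IH] by (simp add: mult)
qed (simp add: assms(1))

lemma translate_coeff_bound:
  assumes radius: "\<nu> r \<le> \<nu> [:\<delta>:]"
    and bound: "\<And>i. G \<le> \<nu> (M * [:coeff p i:] * r ^ i)"
  shows "G \<le> \<nu> (M * [:coeff (p \<circ>\<^sub>p [:\<delta>, 1:]) j:] * r ^ j)"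
  using bound
proof (induction p arbitrary: M j rule: pCons_induct)
  case (pCons c p)
  define P where "P = p \<circ>\<^sub>p [:\<delta>, 1:]"
  have "G \<le> \<nu> (M * r * [:coeff p i:] * r ^ i)" for i
    using pCons.prems[of "Suc i"] by (simp add: ac_simps)
  then have IH: "G \<le> \<nu> (M * r * [:coeff P i:] * r ^ i)" for i
    unfolding P_def by (rule pCons.IH)
  have "coeff (pCons c p \<circ>\<^sub>p [:\<delta>, 1:]) j =
      (if j = 0 then c else 0) + \<delta> * coeff P j + (if j = 0 then 0 else coeff P (j - 1))"
    by (cases j) (simp_all add: P_def pcompose_pCons)
  then have split: "M * [:coeff (pCons c p \<circ>\<^sub>p [:\<delta>, 1:]) j:] * r ^ j =
      M * [:if j = 0 then c else 0:] * r ^ j + [:\<delta>:] * (M * [:coeff P j:] * r ^ j)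
      + M * [:if j = 0 then 0 else coeff P (j - 1):] * r ^ j"
    by (simp add: algebra_simps smult_add_left)
  have "G \<le> \<nu> (M * [:if j = 0 then c else 0:] * r ^ j)"
    using pCons.prems[of 0] by auto
  moreover have "G \<le> \<nu> ([:\<delta>:] * (M * [:coeff P j:] * r ^ j))"
  proof -
    have "G \<le> \<nu> (r * (M * [:coeff P j:] * r ^ j))"
      using IH[of j] by (simp only: ac_simps)
    also have "\<dots> = \<nu> r + \<nu> (M * [:coeff P j:] * r ^ j)"
      by (rule mult)
    also have "\<dots> \<le> \<nu> [:\<delta>:] + \<nu> (M * [:coeff P j:] * r ^ j)"
      using radius by (rule add_right_mono)
    also have "\<dots> = \<nu> ([:\<delta>:] * (M * [:coeff P j:] * r ^ j))"
      by (rule mult[symmetric])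
    finally show ?thesis .
  qed
  moreover have "G \<le> \<nu> (M * [:if j = 0 then 0 else coeff P (j - 1):] * r ^ j)"
    using IH[of "j - 1"] by (cases j) (simp_all add: ac_simps)
  ultimately show ?case
    unfolding split by (intro add_ge)
qed simp

lemma value_eval_eq_of_nuQ_eq:
  assumes less: "\<nu> [:-b, 1:] < \<nu> [:-a, 1:]"
    and stable_b: "nuQ \<nu> [:-b, 1:] h = \<nu> h"
    and stable_a: "nuQ \<nu> [:-a, 1:] h = \<nu> h"
  shows "\<nu> [:poly h a:] = \<nu> h"
proof -
  define p where "p = h \<circ>\<^sub>p [:a, 1:]"
  have "[:a - b:] = [:-b, 1:] - [:-a, 1:]"
    by simp
  then have radius: "\<nu> [:-b, 1:] \<le> \<nu> [:a - b:]"
    using diff_eq_of_less[OF less] by simp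
  have shift: "p = (h \<circ>\<^sub>p [:b, 1:]) \<circ>\<^sub>p [:a - b, 1:]"
    by (simp add: p_def pcompose_assoc[symmetric] pcompose_pCons)
  have "\<nu> h \<le> \<nu> (1 * [:coeff (h \<circ>\<^sub>p [:b, 1:]) i:] * [:-b, 1:] ^ i)" for i
    using nuQ_linear_le[of \<nu> b h] stable_b by simp
  then have below: "\<nu> h \<le> \<nu> ([:coeff p i:] * [:-b, 1:] ^ i)" for i
    using translate_coeff_bound[OF radius] shift by (metis mult_1)
  have ge: "\<nu> h \<le> \<nu> [:poly h a:]"
    using nuQ_linear_le[of \<nu> a h 0] stable_a by (simp add: pcompose_coeff_0)
  obtain i where i: "\<nu> h = \<nu> ([:coeff p i:] * [:-a, 1:] ^ i)"
    using nuQ_linear_attained[of \<nu> a h] stable_a by (auto simp: p_def)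
  show ?thesis
  proof (cases "i = 0 \<or> \<nu> h = Pinf")
    case True
    then show ?thesis
      using i ge by (auto simp: p_def pcompose_coeff_0)
  next
    case False
    have "\<nu> h = \<nu> [:coeff p i:] + \<nu> ([:-a, 1:] ^ i)"
      using i by (simp only: mult)
    then have "\<nu> [:coeff p i:] \<noteq> Pinf"
      using False by (cases "\<nu> ([:-a, 1:] ^ i)") auto
    then obtain x where x: "\<nu> [:coeff p i:] = Fin x"
      using Fin_of_not_Pinf by blast
    have "\<nu> ([:coeff p i:] * [:-b, 1:] ^ i) < \<nu> ([:coeff p i:] * [:-a, 1:] ^ i)"
      using power_strict_mono[OF less, of i] False
      unfolding mult x by (simp add: extended_Fin_add_strict_left_mono)
    then show ?thesis
      using below[of i] i by simp
  qed
qed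

lemma ult_value_eval_of_stable:
  assumes linear: "\<And>Q. Q \<in> \<Q> \<Longrightarrow> Q = [:coeff Q 0, 1:]"
    and no_max: "\<And>Q. Q \<in> \<Q> \<Longrightarrow> \<exists>R\<in>\<Q>. \<nu> Q < \<nu> R"
    and stable: "Q_stable \<nu> \<Q> h"
  shows "ult_holds \<nu> \<Q> (\<lambda>Q. \<nu> [:poly h (- coeff Q 0):] = \<nu> h)"
proof -
  obtain Q0 where "Q0 \<in> \<Q>"
    and stable_from: "\<And>Q. Q \<in> \<Q> \<Longrightarrow> \<nu> Q0 \<le> \<nu> Q \<Longrightarrow> nuQ \<nu> Q h = \<nu> h"
    using stable unfolding Q_stable_def ult_holds_def by blast
  then obtain Q1 where Q1: "Q1 \<in> \<Q>" "\<nu> Q0 < \<nu> Q1"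
    using no_max by blast
  have root: "Q = [:- (- coeff Q 0), 1:]" if "Q \<in> \<Q>" for Q
    using linear[OF that] by simp
  show ?thesis
    unfolding ult_holds_def
  proof (intro bexI[OF _ Q1(1)] ballI impI)
    fix Q assume Q: "Q \<in> \<Q>" "\<nu> Q1 \<le> \<nu> Q"
    then have "\<nu> Q0 < \<nu> Q"
      using Q1(2) by simp
    then show "\<nu> [:poly h (- coeff Q 0):] = \<nu> h"
      using value_eval_eq_of_nuQ_eq[of "- coeff Q0 0" "- coeff Q 0" h] root stable_from Q \<open>Q0 \<in> \<Q>\<close>
      by simp
  qed
qed

lemma ult_value_eval_of_degree_less:
  assumes linear: "\<And>Q. Q \<in> \<Q> \<Longrightarrow> Q = [:coeff Q 0, 1:]"
    and no_max: "\<And>Q. Q \<in> \<Q> \<Longrightarrow> \<exists>R\<in>\<Q>. \<nu> Q < \<nu> R"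
    and nonempty: "\<Q> \<noteq> {}"
    and F: "F \<in> KP_infty \<nu> \<Q>"
    and degree: "degree g < degree F"
  shows "ult_holds \<nu> \<Q> (\<lambda>Q. \<nu> [:poly g (- coeff Q 0):] = \<nu> g)"
proof (cases "g = 0")
  case True
  then show ?thesis
    using nonempty by (auto simp: ult_holds_def)
next
  case False
  define c where "c = lead_coeff g"
  define g1 where "g1 = smult (inverse c) g"
  have g: "g = smult c g1"
    using False by (simp add: g1_def c_def)
  have "lead_coeff g1 = 1" "degree g1 < degree F"
    using False degree by (simp_all add: g1_def c_def)
  then have "Q_stable \<nu> \<Q> g1"
    using F by (auto simp: KP_infty_def)
  with linear no_max have "ult_holds \<nu> \<Q> (\<lambda>Q. \<nu> [:poly g1 (- coeff Q 0):] = \<nu> g1)"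
    by (rule ult_value_eval_of_stable)
  then show ?thesis
    by (rule ult_holds_mono) (simp add: g const_mult smult)
qed

end

theorem mainTheorem17:
  fixes \<nu> :: "'k::field poly \<Rightarrow> 'g::linordered_ab_group_add extended"
    and m :: nat and \<Q> :: "'k poly set" and F :: "'k poly"
  assumes divisible: "divisible_group TYPE('g)"
    and val: "is_poly_valuation \<nu>"
    and ws: "well_specified \<nu>"
    and m_ge: "m \<ge> 1"
    and Psi_ne: "Psi \<nu> m \<noteq> {}"
    and Psi_nomax: "\<forall>Q\<in>Psi \<nu> m. \<exists>R\<in>Psi \<nu> m. \<nu> Q < \<nu> R"
    and Q_sub: "\<Q> \<subseteq> Psi \<nu> m"
    and Q_wo: "nu_well_ordered \<nu> \<Q>"
    and Q_cof: "\<forall>Q\<in>Psi \<nu> m. \<exists>R\<in>\<Q>. \<nu> Q \<le> \<nu> R"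
    and unstable_ex: "\<exists>f. \<not> Q_stable \<nu> \<Q> f"
    and F: "F \<in> KP_infty \<nu> \<Q>"
    and m1: "m = 1"
  shows "\<forall>l\<in>{1..degree F div m}. ultimately_constant \<nu> \<Q> (\<lambda>Q. \<nu> (qexp Q F l))"
  \<comment> \<open>Only \<open>m = 1\<close>, the minimality of \<open>F\<close> and the cofinality of \<open>\<Q>\<close> in a set of key
      polynomials without maximal value are needed.\<close>
proof
  interpret poly_valuation \<nu>
    by (rule poly_valuation.intro[OF val])
  fix l assume l: "l \<in> {1..degree F div m}"
  have linear: "Q = [:coeff Q 0, 1:]" if "Q \<in> \<Q>" for Q
    using that Q_sub m1 monic_linear_eq by (auto simp: Psi_def key_poly_def)
  have no_max: "\<exists>R\<in>\<Q>. \<nu> Q < \<nu> R" if "Q \<in> \<Q>" for Q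
    using that Psi_nomax Q_sub Q_cof by (meson order_less_le_trans subsetD)
  have nonempty: "\<Q> \<noteq> {}"
    using Psi_ne Q_cof by blast
  have "degree (hasse l F) < degree F"
    using degree_hasse[of l F] l m1 by (cases "hasse l F = 0") auto
  then have "ult_holds \<nu> \<Q> (\<lambda>Q. \<nu> [:poly (hasse l F) (- coeff Q 0):] = \<nu> (hasse l F))"
    using ult_value_eval_of_degree_less[OF linear no_max nonempty F] by blast
  then have "ult_holds \<nu> \<Q> (\<lambda>Q. \<nu> (qexp Q F l) = \<nu> (hasse l F))"
    by (rule ult_holds_mono) (metis linear qexp_linear minus_minus poly_hasse)
  then show "ultimately_constant \<nu> \<Q> (\<lambda>Q. \<nu> (qexp Q F l))"
    unfolding ultimately_constant_def by blast
qed

end
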